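(* Let $\psi_j$ be a decomposable factorization curve of a (real or complex) factorization structure $\varphi:\mathfrak{h}\to V^*$, and let $1\le r\le\deg\psi_j+1$. Then for any $r$ pairwise distinct points $\ell_1,\ldots,\ell_r\in\mathbb{P}(V_j)$, the lines $\psi_j(\ell_1),\ldots,\psi_j(\ell_r)\subset\mathfrak{h}$ are linearly independent.
   Context: $V_1,\ldots,V_m$ are 2-dimensional vector spaces over $\mathbb{F}=\mathbb{R}$ or $\mathbb{C}$, $V^*=V_1^*\otimes\cdots\otimes V_m^*$, $\Sigma^0_{j,\ell}=V_1^*\otimes\cdots\otimes\ell^0\otimes\cdots\otimes V_m^*$ ($\ell^0$ the annihilator of $\ell$, in slot $j$). A factorization structure of dimension $m$ is an injective linear map $\varphi:\mathfrak{h}\to V^*$, $\dim\mathfrak{h}=m+1$, with $\dim(\varphi(\mathfrak{h})\cap\Sigma^0_{j,\ell})=1$ for all $j$ and all $\ell$ in a nonempty Zariski-open subset of $\mathbb{P}(V_j)$. The $j$-th factorization curve $\psi_j:\mathbb{P}(V_j)\to\mathbb{P}(\mathfrak{h})$ is the unique regular extension of the generically defined regular map $\ell\mapsto\varphi^{-1}(\varphi(\mathfrak{h})\cap\Sigma^0_{j,\ell})$; $\deg\psi_j$ is the integer $e$ with $\psi_j^*\mathcal{O}_{\mathfrak{h}}(1)\cong\mathcal{O}_{V_j}(e)$. Curves with the same image are equivalent; $\psi_j$ is decomposable if its equivalence class in $\{\psi_1,\ldots,\psi_m\}$ has exactly $\deg\psi_j$ elements. *)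

theory Defs
  imports Main "HOL-Computational_Algebra.Polynomial"
begin

text \<open>Coordinates: V_j = F^2 with basis e_False, e_True; a point of P(V_j) is the class
  of a nonzero vector. V^* = V_1^* \<otimes> ... \<otimes> V_m^* is represented by functions on
  bool lists of length m (value at xs = T(e_{xs!0},...,e_{xs!(m-1)})), zero elsewhere.
  h = F^(m+1) is represented by functions nat \<Rightarrow> F vanishing above m.\<close>

definition proj_pt :: "'a::field \<times> 'a \<Rightarrow> ('a \<times> 'a) set" where
  "proj_pt a = {(c * fst a, c * snd a) | c. c \<noteq> 0}"

definition P1 :: "('a::field \<times> 'a) set set" where
  "P1 = {proj_pt a | a. a \<noteq> (0, 0)}"

definition zariski_open_P1 :: "('a::field \<times> 'a) set set \<Rightarrow> bool" where
  "zariski_open_P1 U \<longleftrightarrow> U \<subseteq> P1 \<and> (U = {} \<or> finite (P1 - U))"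

definition hspace :: "nat \<Rightarrow> (nat \<Rightarrow> 'a::field) set" where
  "hspace m = {v. \<forall>i>m. v i = 0}"

definition tensor_space :: "nat \<Rightarrow> (bool list \<Rightarrow> 'a::field) set" where
  "tensor_space m = {T. \<forall>xs. length xs \<noteq> m \<longrightarrow> T xs = 0}"

definition fs_map :: "nat \<Rightarrow> (nat \<Rightarrow> bool list \<Rightarrow> 'a::field) \<Rightarrow> (nat \<Rightarrow> 'a) \<Rightarrow> (bool list \<Rightarrow> 'a)" where
  "fs_map m B v = (\<lambda>xs. if length xs = m then (\<Sum>i\<le>m. v i * B i xs) else 0)"

text \<open>Sigma^0_{j,l} = kernel of contraction of slot j with l = [a] (j 0-indexed, j < m).\<close>
definition Sigma0 :: "nat \<Rightarrow> nat \<Rightarrow> 'a::field \<times> 'a \<Rightarrow> (bool list \<Rightarrow> 'a) set" where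
  "Sigma0 m j a = {T \<in> tensor_space m. \<forall>xs. length xs = m \<longrightarrow>
      fst a * T (xs[j := False]) + snd a * T (xs[j := True]) = 0}"

definition line_span :: "('b \<Rightarrow> 'a::field) \<Rightarrow> ('b \<Rightarrow> 'a) set" where
  "line_span v = {(\<lambda>i. c * v i) | c. True}"

definition one_dim :: "('b \<Rightarrow> 'a::field) set \<Rightarrow> bool" where
  "one_dim S \<longleftrightarrow> (\<exists>v. (\<exists>i. v i \<noteq> 0) \<and> S = line_span v)"

definition factorization_structure :: "nat \<Rightarrow> (nat \<Rightarrow> bool list \<Rightarrow> 'a::field) \<Rightarrow> bool" where
  "factorization_structure m B \<longleftrightarrow>
     inj_on (fs_map m B) (hspace m) \<and>
     (\<forall>j<m. \<exists>U. zariski_open_P1 U \<and> U \<noteq> {} \<and>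
        (\<forall>a. a \<noteq> (0, 0) \<and> proj_pt a \<in> U \<longrightarrow>
           one_dim (fs_map m B ` hspace m \<inter> Sigma0 m j a)))"

text \<open>Regular maps P^1 \<rightarrow> P(h) of degree e: given by m+1 binary forms
  f_i(x,y) = sum_{k\<le>e} coeff (p i) k x^k y^(e-k) of degree e without common factor
  (equivalently without common zero over the algebraic closure).\<close>
definition hom_eval :: "nat \<Rightarrow> nat \<Rightarrow> (nat \<Rightarrow> 'a::field poly) \<Rightarrow> 'a \<times> 'a \<Rightarrow> (nat \<Rightarrow> 'a)" where
  "hom_eval m e p a = (\<lambda>i. if i \<le> m then (\<Sum>k\<le>e. coeff (p i) k * fst a ^ k * snd a ^ (e - k)) else 0)"

definition regular_rep :: "nat \<Rightarrow> nat \<Rightarrow> (nat \<Rightarrow> 'a::field poly) \<Rightarrow> bool" where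
  "regular_rep m e p \<longleftrightarrow>
     (\<forall>i\<le>m. degree (p i) \<le> e) \<and>
     (\<exists>i\<le>m. coeff (p i) e \<noteq> 0) \<and>
     (\<forall>q. (\<forall>i\<le>m. q dvd p i) \<longrightarrow> degree q = 0)"

text \<open>psi_j given by (e,p) is the j-th factorization curve: a regular map of degree e that
  agrees with l \<mapsto> phi^{-1}(phi(h) \<inter> Sigma^0_{j,l}) on a nonempty Zariski-open set.\<close>
definition factorization_curve ::
  "nat \<Rightarrow> (nat \<Rightarrow> bool list \<Rightarrow> 'a::field) \<Rightarrow> nat \<Rightarrow> nat \<Rightarrow> (nat \<Rightarrow> 'a poly) \<Rightarrow> bool" where
  "factorization_curve m B j e p \<longleftrightarrow> regular_rep m e p \<and>
     (\<exists>U. zariski_open_P1 U \<and> U \<noteq> {} \<and>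
        (\<forall>a. a \<noteq> (0, 0) \<and> proj_pt a \<in> U \<longrightarrow>
           line_span (hom_eval m e p a) = {v \<in> hspace m. fs_map m B v \<in> Sigma0 m j a}))"

definition curve_image :: "nat \<Rightarrow> nat \<Rightarrow> (nat \<Rightarrow> 'a::field poly) \<Rightarrow> (nat \<Rightarrow> 'a) set set" where
  "curve_image m e p = {line_span (hom_eval m e p a) | a. a \<noteq> (0, 0)}"

definition decomposable :: "nat \<Rightarrow> (nat \<Rightarrow> nat) \<Rightarrow> (nat \<Rightarrow> nat \<Rightarrow> 'a::field poly) \<Rightarrow> nat \<Rightarrow> bool" where
  "decomposable m e p j \<longleftrightarrow>
     card {k. k < m \<and> curve_image m (e k) (p k) = curve_image m (e j) (p j)} = e j"

definition lin_indep_family :: "nat \<Rightarrow> (nat \<Rightarrow> 'b \<Rightarrow> 'a::field) \<Rightarrow> bool" where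
  "lin_indep_family r w \<longleftrightarrow>
     (\<forall>c. (\<forall>t. (\<Sum>i<r. c i * w i t) = 0) \<longrightarrow> (\<forall>i<r. c i = 0))"

end

theory Submission
  imports Defs Complex_Main
begin

text \<open>Each factorization curve \<open>\<psi>\<^sub>k\<close> satisfies \<open>\<phi>(\<psi>\<^sub>k(\<ell>)) \<in> \<Sigma>\<^sup>0\<^sub>k\<^sub>,\<^sub>\<ell>\<close> for every
  \<open>\<ell>\<close>, not only on a Zariski-open set: the contraction of \<open>\<phi>(\<psi>\<^sub>k(\<ell>))\<close> with \<open>\<ell>\<close> in slot \<open>k\<close>
  is a binary form in \<open>\<ell>\<close>, and a binary form with infinitely many zeros vanishes. Since \<open>\<phi>\<close>
  is injective and a nonzero tensor is not annihilated in one slot by two independent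
  vectors, \<open>\<psi>\<^sub>j\<close> is injective.

  If \<open>\<psi>\<^sub>j\<close> is decomposable, the \<open>deg \<psi>\<^sub>j\<close> curves \<open>\<psi>\<^sub>k\<close> with the image of \<open>\<psi>\<^sub>j\<close> pass through
  every point \<open>\<psi>\<^sub>j(\<ell>\<^sub>i)\<close>. Given a relation \<open>\<Sum> c\<^sub>i \<psi>\<^sub>j(\<ell>\<^sub>i) = 0\<close> and an index \<open>i\<^sub>0\<close>, match the
  other \<open>r - 1 \<le> deg \<psi>\<^sub>j\<close> indices \<open>i\<close> injectively with such curves \<open>\<psi>\<^sub>g\<^sub>(\<^sub>i\<^sub>)\<close> and contract the
  image of the relation under \<open>\<phi>\<close> in each slot \<open>g(i)\<close> with the parameter of \<open>\<psi>\<^sub>j(\<ell>\<^sub>i)\<close> on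
  \<open>\<psi>\<^sub>g\<^sub>(\<^sub>i\<^sub>)\<close>. This kills the \<open>i\<close>-th term but not the \<open>i\<^sub>0\<close>-th one, whose tensor is annihilated
  in that slot by the parameter of \<open>\<psi>\<^sub>j(\<ell>\<^sub>i\<^sub>0) \<noteq> \<psi>\<^sub>j(\<ell>\<^sub>i)\<close>, a different point. Hence \<open>c\<^sub>i\<^sub>0 = 0\<close>.\<close>

definition det2 :: "'a::field \<times> 'a \<Rightarrow> 'a \<times> 'a \<Rightarrow> 'a" where
  "det2 a b = fst a * snd b - snd a * fst b"

lemma det2_neq_0_imp_zero_solution:
  assumes "fst d * u + snd d * v = 0" "fst b * u + snd b * v = 0" "det2 d b \<noteq> 0"
  shows "u = 0 \<and> v = 0"
proof -
  have "det2 d b * u = snd b * (fst d * u + snd d * v) - snd d * (fst b * u + snd b * v)"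
    "det2 d b * v = fst d * (fst b * u + snd b * v) - fst b * (fst d * u + snd d * v)"
    by (simp_all add: det2_def algebra_simps)
  then have "det2 d b * u = 0" "det2 d b * v = 0" using assms(1,2) by simp_all
  then show ?thesis using assms(3) by simp
qed

definition contract :: "nat \<Rightarrow> 'a::field \<times> 'a \<Rightarrow> (bool list \<Rightarrow> 'a) \<Rightarrow> bool list \<Rightarrow> 'a" where
  "contract k b T = (\<lambda>xs. fst b * T (xs[k := False]) + snd b * T (xs[k := True]))"

definition contract_list ::
  "(nat \<times> ('a::field \<times> 'a)) list \<Rightarrow> (bool list \<Rightarrow> 'a) \<Rightarrow> bool list \<Rightarrow> 'a" where
  "contract_list L T = foldr (\<lambda>kb. contract (fst kb) (snd kb)) L T"

definition zero_tensor :: "nat \<Rightarrow> (bool list \<Rightarrow> 'a::zero) \<Rightarrow> bool" where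
  "zero_tensor m T \<longleftrightarrow> (\<forall>xs. length xs = m \<longrightarrow> T xs = 0)"

definition annihilated :: "nat \<Rightarrow> nat \<Rightarrow> 'a::field \<times> 'a \<Rightarrow> (bool list \<Rightarrow> 'a) \<Rightarrow> bool" where
  "annihilated m k b T \<longleftrightarrow> zero_tensor m (contract k b T)"

lemma contract_list_Nil [simp]: "contract_list [] T = T"
  by (simp add: contract_list_def)

lemma contract_list_Cons [simp]:
  "contract_list (kb # L) T = contract (fst kb) (snd kb) (contract_list L T)"
  by (simp add: contract_list_def)

lemma annihilated_if_Sigma0: "T \<in> Sigma0 m k b \<Longrightarrow> annihilated m k b T"
  by (simp add: Sigma0_def annihilated_def zero_tensor_def contract_def)

lemma contract_sum:
  "contract k b (\<lambda>xs. \<Sum>i\<in>I. c i * F i xs) = (\<lambda>xs. \<Sum>i\<in>I. c i * contract k b (F i) xs)"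
  by (simp add: contract_def sum_distrib_left sum.distrib algebra_simps)

lemma contract_list_sum:
  "contract_list L (\<lambda>xs. \<Sum>i\<in>I. c i * F i xs) = (\<lambda>xs. \<Sum>i\<in>I. c i * contract_list L (F i) xs)"
  by (induction L) (simp_all add: contract_sum)

lemma zero_tensor_contract: "zero_tensor m T \<Longrightarrow> zero_tensor m (contract k b T)"
  by (simp add: zero_tensor_def contract_def)

lemma zero_tensor_contract_list: "zero_tensor m T \<Longrightarrow> zero_tensor m (contract_list L T)"
  by (induction L) (simp_all add: zero_tensor_contract)

lemma annihilated_scale: "annihilated m k b T \<Longrightarrow> annihilated m k b (\<lambda>xs. c * T xs)"
  by (simp add: annihilated_def zero_tensor_def contract_def)
    (metis distrib_left mult.left_commute mult_zero_right)

lemma annihilated_contract: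
  assumes "annihilated m k d T" "k \<noteq> k'"
  shows "annihilated m k d (contract k' b T)"
  unfolding annihilated_def zero_tensor_def
proof (intro allI impI)
  fix xs :: "bool list" assume "length xs = m"
  then have "contract k d T (xs[k' := False]) = 0" "contract k d T (xs[k' := True]) = 0"
    using assms(1) by (auto simp: annihilated_def zero_tensor_def)
  moreover have "xs[k := x, k' := y] = xs[k' := y, k := x]" for x y
    using assms(2) by (rule list_update_swap)
  then have "contract k d (contract k' b T) xs
      = fst b * contract k d T (xs[k' := False]) + snd b * contract k d T (xs[k' := True])"
    by (simp add: contract_def algebra_simps)
  ultimately show "contract k d (contract k' b T) xs = 0" by simp
qed

lemma annihilated_contract_list:
  "annihilated m k d T \<Longrightarrow> k \<notin> fst ` set L \<Longrightarrow> annihilated m k d (contract_list L T)"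
  by (induction L) (auto intro: annihilated_contract)

lemma zero_tensor_contract_list_if_annihilated:
  "distinct (map fst L) \<Longrightarrow> (k, b) \<in> set L \<Longrightarrow> annihilated m k b T
    \<Longrightarrow> zero_tensor m (contract_list L T)"
proof (induction L)
  case (Cons kb L)
  show ?case
  proof (cases "(k, b) \<in> set L")
    case True
    then show ?thesis using Cons by (auto intro: zero_tensor_contract)
  next
    case False
    then have "kb = (k, b)" "k \<notin> fst ` set L" using Cons.prems by force+
    then show ?thesis
      using annihilated_contract_list[OF Cons.prems(3)] by (simp add: annihilated_def)
  qed
qed simp

lemma nonzero_contract:
  assumes "annihilated m k d T" "det2 d b \<noteq> 0" "\<not> zero_tensor m T"
  shows "\<not> zero_tensor m (contract k b T)"
proof
  assume zero: "zero_tensor m (contract k b T)"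
  obtain xs where xs: "length xs = m" "T xs \<noteq> 0" using assms(3) by (auto simp: zero_tensor_def)
  have "fst d * T (xs[k := False]) + snd d * T (xs[k := True]) = 0"
    "fst b * T (xs[k := False]) + snd b * T (xs[k := True]) = 0"
    using assms(1) zero xs(1) by (auto simp: annihilated_def zero_tensor_def contract_def)
  then have "T (xs[k := False]) = 0 \<and> T (xs[k := True]) = 0"
    using det2_neq_0_imp_zero_solution assms(2) by blast
  moreover have "xs[k := xs ! k] = xs" by simp
  ultimately show False using xs(2) by (metis (full_types))
qed

lemma nonzero_contract_list:
  "distinct (map fst L) \<Longrightarrow> (\<forall>(k, b) \<in> set L. \<exists>d. annihilated m k d T \<and> det2 d b \<noteq> 0)
    \<Longrightarrow> \<not> zero_tensor m T \<Longrightarrow> \<not> zero_tensor m (contract_list L T)"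
proof (induction L)
  case (Cons kb L)
  obtain d where d: "annihilated m (fst kb) d T" "det2 d (snd kb) \<noteq> 0"
    using Cons.prems(2) by (cases kb) auto
  have "annihilated m (fst kb) d (contract_list L T)"
    using annihilated_contract_list[OF d(1)] Cons.prems(1) by auto
  then show ?case using nonzero_contract[OF _ d(2)] Cons by simp
qed simp

lemma zero_tensor_if_annihilated_twice:
  "annihilated m k a T \<Longrightarrow> annihilated m k a' T \<Longrightarrow> det2 a a' \<noteq> 0 \<Longrightarrow> zero_tensor m T"
  using nonzero_contract unfolding annihilated_def by blast

lemma coefficient_eq_0_by_contractions:
  fixes F :: "'i \<Rightarrow> bool list \<Rightarrow> 'a::field"
  assumes "finite I" "i0 \<notin> I" "inj_on g I"
    and annihilators: "\<And>i. i \<in> I \<Longrightarrow> \<exists>b d. annihilated m (g i) b (F i) \<and>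
        annihilated m (g i) d (F i0) \<and> det2 d b \<noteq> 0"
    and nonzero: "\<not> zero_tensor m (F i0)"
    and relation: "zero_tensor m (\<lambda>xs. \<Sum>i\<in>insert i0 I. c i * F i xs)"
  shows "c i0 = 0"
proof -
  have "\<forall>i\<in>I. \<exists>b. \<exists>d. annihilated m (g i) b (F i) \<and>
      annihilated m (g i) d (F i0) \<and> det2 d b \<noteq> 0"
    using annihilators by blast
  then obtain b where "\<forall>i\<in>I. \<exists>d. annihilated m (g i) (b i) (F i) \<and>
      annihilated m (g i) d (F i0) \<and> det2 d (b i) \<noteq> 0"
    by (rule bchoice[THEN exE])
  then obtain d where ann: "\<forall>i\<in>I. annihilated m (g i) (b i) (F i) \<and>
      annihilated m (g i) (d i) (F i0) \<and> det2 (d i) (b i) \<noteq> 0"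
    by (rule bchoice[THEN exE])
  obtain ixs where ixs: "distinct ixs" "set ixs = I"
    using finite_distinct_list[OF assms(1)] by blast
  define L where "L = map (\<lambda>i. (g i, b i)) ixs"
  have dist: "distinct (map fst L)"
    using ixs assms(3) by (simp add: L_def o_def distinct_map)
  have killed: "zero_tensor m (contract_list L (F i))" if "i \<in> I" for i
  proof -
    have "(g i, b i) \<in> set L" using that ixs(2) by (simp add: L_def)
    then show ?thesis using zero_tensor_contract_list_if_annihilated[OF dist] ann that by blast
  qed
  have "\<forall>(k, b') \<in> set L. \<exists>d'. annihilated m k d' (F i0) \<and> det2 d' b' \<noteq> 0"
    using ann ixs(2) by (auto simp: L_def simp del: split_paired_Ex)
  then have "\<not> zero_tensor m (contract_list L (F i0))"
    using nonzero_contract_list[OF dist _ nonzero] by blast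
  then obtain xs where xs: "length xs = m" "contract_list L (F i0) xs \<noteq> 0"
    by (auto simp: zero_tensor_def)
  have "0 = (\<Sum>i\<in>insert i0 I. c i * contract_list L (F i) xs)"
    using zero_tensor_contract_list[OF relation, of L] xs(1)
    by (simp add: contract_list_sum zero_tensor_def)
  also have "\<dots> = c i0 * contract_list L (F i0) xs"
    using assms(1,2) killed xs(1) by (simp add: zero_tensor_def)
  finally show ?thesis using xs(2) by simp
qed

definition binary_form :: "nat \<Rightarrow> (nat \<Rightarrow> 'a::field) \<Rightarrow> 'a \<times> 'a \<Rightarrow> 'a" where
  "binary_form n g b = (\<Sum>s\<le>n. g s * fst b ^ s * snd b ^ (n - s))"

lemma binary_form_scale: "binary_form n g (c * x, c * y) = c ^ n * binary_form n g (x, y)"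
proof -
  have "g s * (c * x) ^ s * (c * y) ^ (n - s) = c ^ n * (g s * x ^ s * y ^ (n - s))"
    if "s \<le> n" for s
  proof -
    have "c ^ s * c ^ (n - s) = c ^ n" using that by (simp flip: power_add)
    then show ?thesis by (simp add: power_mult_distrib algebra_simps)
  qed
  then show ?thesis
    unfolding binary_form_def sum_distrib_left fst_conv snd_conv by (intro sum.cong refl) simp
qed

lemma binary_form_affine: "binary_form n g (t, 1) = poly (\<Sum>s\<le>n. monom (g s) s) t"
  by (simp add: binary_form_def poly_sum poly_monom)

lemma binary_form_infinity: "binary_form n g (x, 0) = g n * x ^ n"
proof -
  have "binary_form n g (x, 0) = (\<Sum>s\<in>{n}. g s * x ^ s * 0 ^ (n - s))"
    unfolding binary_form_def fst_conv snd_conv by (rule sum.mono_neutral_right) auto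
  then show ?thesis by simp
qed

lemma binary_form_add: "binary_form n g a + binary_form n h a = binary_form n (\<lambda>s. g s + h s) a"
  by (simp add: binary_form_def sum.distrib algebra_simps)

lemma fst_mult_binary_form:
  "fst a * binary_form n g a = binary_form (Suc n) (\<lambda>s. if s = 0 then 0 else g (s - 1)) a"
  unfolding binary_form_def sum.atMost_Suc_shift by (simp add: sum_distrib_left algebra_simps)

lemma snd_mult_binary_form:
  "snd a * binary_form n g a = binary_form (Suc n) (\<lambda>s. if s \<le> n then g s else 0) a"
  unfolding binary_form_def sum_distrib_left sum.atMost_Suc
  by (simp, intro sum.cong refl) (auto simp: Suc_diff_le)

lemma binary_form_eq_0_if_infinite_affine_zeros:
  assumes "infinite {t. binary_form n g (t, 1) = 0}"
  shows "binary_form n g a = 0"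
proof -
  let ?P = "\<Sum>s\<le>n. monom (g s) s"
  have "?P = 0" using assms poly_roots_finite by (fastforce simp: binary_form_affine)
  moreover have "coeff ?P s = g s" if "s \<le> n" for s
    using that by (simp add: coeff_sum coeff_monom)
  ultimately have "g s = 0" if "s \<le> n" for s
    using that by (metis coeff_0)
  then show ?thesis by (simp add: binary_form_def)
qed

lemma proj_pt_scale:
  assumes "c \<noteq> 0"
  shows "proj_pt (c * fst a, c * snd a) = proj_pt (a :: 'a::field \<times> 'a)"
proof
  show "proj_pt (c * fst a, c * snd a) \<subseteq> proj_pt a"
  proof
    fix z assume "z \<in> proj_pt (c * fst a, c * snd a)"
    then obtain d where "d \<noteq> 0" "z = (d * (c * fst a), d * (c * snd a))"
      by (auto simp: proj_pt_def)
    then show "z \<in> proj_pt a" using assms unfolding proj_pt_def by (auto intro!: exI[of _ "d * c"])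
  qed
  show "proj_pt a \<subseteq> proj_pt (c * fst a, c * snd a)"
  proof
    fix z assume "z \<in> proj_pt a"
    then obtain d where "d \<noteq> 0" "z = (d * fst a, d * snd a)" by (auto simp: proj_pt_def)
    then show "z \<in> proj_pt (c * fst a, c * snd a)"
      using assms unfolding proj_pt_def by (auto intro!: exI[of _ "d / c"])
  qed
qed

lemma det2_eq_0_imp_proportional:
  fixes a b :: "'a::field \<times> 'a"
  assumes "a \<noteq> (0, 0)" "b \<noteq> (0, 0)" "det2 a b = 0"
  shows "\<exists>c. c \<noteq> 0 \<and> b = (c * fst a, c * snd a)"
proof (cases "fst a = 0")
  case False
  define c where "c = fst b / fst a"
  have "snd b = c * snd a" "fst b = c * fst a"
    using assms(3) False by (auto simp: c_def det2_def field_simps)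
  moreover from this have "c \<noteq> 0" using assms(2) by (auto simp: prod_eq_iff)
  ultimately show ?thesis by (metis prod.collapse)
next
  case True
  then have "snd a \<noteq> 0" "fst b = 0" using assms by (auto simp: prod_eq_iff det2_def)
  then show ?thesis
    using True assms(2) by (intro exI[of _ "snd b / snd a"]) (auto simp: prod_eq_iff)
qed

lemma det2_neq_0_if_proj_pt_neq:
  fixes a b :: "'a::field \<times> 'a"
  assumes "a \<noteq> (0, 0)" "b \<noteq> (0, 0)" "proj_pt a \<noteq> proj_pt b"
  shows "det2 a b \<noteq> 0"
  using det2_eq_0_imp_proportional[OF assms(1,2)] proj_pt_scale assms(3) by metis

lemma inj_proj_pt_affine: "inj (\<lambda>t::'a::field. proj_pt (t, 1))"
proof (rule injI)
  fix t t' :: 'a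
  assume eq: "proj_pt (t, 1) = proj_pt (t', 1)"
  have "(t', 1) \<in> proj_pt (t', 1)"
    unfolding proj_pt_def by (rule CollectI, rule exI[of _ 1]) simp
  then have "(t', 1) \<in> proj_pt (t, 1)" using eq by simp
  then show "t = t'" by (auto simp: proj_pt_def)
qed

lemma infinite_affine_points_in_zariski_open:
  assumes "zariski_open_P1 U" "U \<noteq> {}"
  shows "infinite {t::'a::field_char_0. proj_pt (t, 1) \<in> U}"
proof
  assume finite_in: "finite {t::'a. proj_pt (t, 1) \<in> U}"
  have "proj_pt (t, 1) \<in> P1" for t :: 'a
    unfolding P1_def by (rule CollectI, rule exI[of _ "(t, 1)"]) simp
  then have "(\<lambda>t. proj_pt (t, 1)) ` {t::'a. proj_pt (t, 1) \<notin> U} \<subseteq> P1 - U" by blast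
  moreover have "finite (P1 - U)" using assms by (simp add: zariski_open_P1_def)
  ultimately have "finite ((\<lambda>t. proj_pt (t, 1)) ` {t::'a. proj_pt (t, 1) \<notin> U})"
    using finite_subset by blast
  then have "finite {t::'a. proj_pt (t, 1) \<notin> U}"
    by (rule finite_imageD[OF _ inj_on_subset[OF inj_proj_pt_affine subset_UNIV]])
  with finite_in have "finite ({t::'a. proj_pt (t, 1) \<in> U} \<union> {t. proj_pt (t, 1) \<notin> U})"
    by simp
  moreover have "{t::'a. proj_pt (t, 1) \<in> U} \<union> {t. proj_pt (t, 1) \<notin> U} = UNIV" by auto
  ultimately show False using infinite_UNIV_char_0 by metis
qed

lemma in_line_span_iff: "v \<in> line_span w \<longleftrightarrow> (\<exists>c. v = (\<lambda>i. c * w i))"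
  by (auto simp: line_span_def)

lemma in_line_span_self: "v \<in> line_span v"
  unfolding in_line_span_iff by (rule exI[of _ 1]) simp

lemma line_span_scale:
  assumes "c \<noteq> 0"
  shows "line_span (\<lambda>i. c * v i) = line_span v"
proof -
  have "(\<lambda>i. d * (c * v i)) \<in> line_span v" for d
    unfolding in_line_span_iff by (rule exI[of _ "d * c"]) (simp add: mult.assoc)
  moreover have "(\<lambda>i. d * v i) \<in> line_span (\<lambda>i. c * v i)" for d
    unfolding in_line_span_iff by (rule exI[of _ "d / c"]) (simp add: assms)
  ultimately show ?thesis by (auto simp: in_line_span_iff)
qed

lemma hom_eval_eq_binary_form:
  "i \<le> m \<Longrightarrow> hom_eval m e p a i = binary_form e (\<lambda>s. coeff (p i) s) a"
  by (simp add: hom_eval_def binary_form_def)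

lemma hom_eval_in_hspace: "hom_eval m e p a \<in> hspace m"
  by (simp add: hspace_def hom_eval_def)

lemma hom_eval_scale: "hom_eval m e p (c * x, c * y) = (\<lambda>i. c ^ e * hom_eval m e p (x, y) i)"
proof
  fix i
  show "hom_eval m e p (c * x, c * y) i = c ^ e * hom_eval m e p (x, y) i"
    by (cases "i \<le> m")
      (simp_all add: hom_eval_eq_binary_form binary_form_scale, simp add: hom_eval_def)
qed

text \<open>A regular representative has no common zero: at \<open>(t, 1)\<close> the coordinates are the
  values \<open>poly (p i) t\<close>, sharing the root \<open>t\<close> would give the common factor \<open>[:-t, 1:]\<close>.\<close>
lemma hom_eval_nonzero:
  assumes regular: "regular_rep m e p" and "a \<noteq> (0, 0)"
  shows "\<exists>i\<le>m. hom_eval m e p a i \<noteq> 0"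
proof (rule ccontr)
  assume "\<not> ?thesis"
  then have zero: "\<And>i. i \<le> m \<Longrightarrow> binary_form e (\<lambda>s. coeff (p i) s) a = 0"
    by (simp add: hom_eval_eq_binary_form)
  obtain x y where xy: "a = (x, y)" by force
  show False
  proof (cases "y = 0")
    case True
    obtain i where "i \<le> m" "coeff (p i) e \<noteq> 0" using regular by (auto simp: regular_rep_def)
    then show False using zero[of i] xy True \<open>a \<noteq> (0, 0)\<close> by (simp add: binary_form_infinity)
  next
    case False
    define t where "t = x / y"
    have "poly (p i) t = 0" if "i \<le> m" for i
    proof -
      have "a = (y * t, y * 1)" using xy False by (simp add: t_def)
      then have "binary_form e (\<lambda>s. coeff (p i) s) a
          = y ^ e * binary_form e (\<lambda>s. coeff (p i) s) (t, 1)"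
        by (simp only: binary_form_scale)
      also have "\<dots> = y ^ e * poly (p i) t"
        using that regular by (simp add: binary_form_affine poly_as_sum_of_monoms' regular_rep_def)
      finally have "binary_form e (\<lambda>s. coeff (p i) s) a = y ^ e * poly (p i) t" .
      then show ?thesis using zero[OF that] False by simp
    qed
    then have "\<forall>i\<le>m. [:- t, 1:] dvd p i" by (simp add: poly_eq_0_iff_dvd)
    then show False using regular unfolding regular_rep_def by fastforce
  qed
qed

lemma fs_map_hom_eval:
  "length ys = m \<Longrightarrow>
    fs_map m B (hom_eval m e p b) ys = binary_form e (\<lambda>s. \<Sum>i\<le>m. coeff (p i) s * B i ys) b"
  by (simp add: fs_map_def hom_eval_eq_binary_form binary_form_def sum_distrib_left
      sum_distrib_right algebra_simps sum.swap[where A="{..m}"])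

lemma fs_map_scale: "fs_map m B (\<lambda>t. c * v t) = (\<lambda>xs. c * fs_map m B v xs)"
  by (rule ext) (simp add: fs_map_def sum_distrib_left algebra_simps)

lemma fs_map_sum:
  "fs_map m B (\<lambda>t. \<Sum>i\<in>I. c i * w i t) = (\<lambda>xs. \<Sum>i\<in>I. c i * fs_map m B (w i) xs)"
  by (rule ext) (simp add: fs_map_def sum_distrib_left sum_distrib_right algebra_simps
      sum.swap[where A="{..m}"])

lemma fs_map_nonzero:
  assumes "inj_on (fs_map m B) (hspace m)" "v \<in> hspace m" "v i \<noteq> 0"
  shows "\<not> zero_tensor m (fs_map m B v)"
proof
  assume "zero_tensor m (fs_map m B v)"
  then have "fs_map m B v = fs_map m B (\<lambda>_. 0)" by (auto simp: zero_tensor_def fs_map_def)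
  moreover have "(\<lambda>_. 0) \<in> hspace m" by (simp add: hspace_def)
  ultimately have "v = (\<lambda>_. 0)" using inj_onD[OF assms(1)] assms(2) by blast
  then show False using assms(3) by simp
qed

lemma fs_map_hom_eval_nonzero:
  assumes "factorization_structure m B" "regular_rep m e p" "a \<noteq> (0, 0)"
  shows "\<not> zero_tensor m (fs_map m B (hom_eval m e p a))"
proof -
  obtain i where "hom_eval m e p a i \<noteq> 0" using hom_eval_nonzero assms(2,3) by blast
  moreover have "inj_on (fs_map m B) (hspace m)"
    using assms(1) unfolding factorization_structure_def by blast
  ultimately show ?thesis using fs_map_nonzero[OF _ hom_eval_in_hspace] by blast
qed

lemma factorization_curve_annihilated:
  fixes B :: "nat \<Rightarrow> bool list \<Rightarrow> 'a::field_char_0"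
  assumes curve: "factorization_curve m B k e p" and "b \<noteq> (0, 0)"
  shows "annihilated m k b (fs_map m B (hom_eval m e p b))"
  unfolding annihilated_def zero_tensor_def
proof (intro allI impI)
  fix xs :: "bool list"
  assume len: "length xs = m"
  define aF where "aF = (\<lambda>s. \<Sum>i\<le>m. coeff (p i) s * B i (xs[k := False]))"
  define aT where "aT = (\<lambda>s. \<Sum>i\<le>m. coeff (p i) s * B i (xs[k := True]))"
  define g where "g = (\<lambda>s. (if s = 0 then 0 else aF (s - 1)) + (if s \<le> e then aT s else 0))"
  have contraction_form:
    "contract k a (fs_map m B (hom_eval m e p a)) xs = binary_form (Suc e) g a" for a
    using len unfolding g_def aF_def aT_def
    by (simp add: contract_def fs_map_hom_eval fst_mult_binary_form snd_mult_binary_form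
        binary_form_add)
  obtain U where U: "zariski_open_P1 U" "U \<noteq> {}"
    "\<And>a. a \<noteq> (0, 0) \<and> proj_pt a \<in> U \<Longrightarrow>
        line_span (hom_eval m e p a) = {v \<in> hspace m. fs_map m B v \<in> Sigma0 m k a}"
    using curve by (auto simp: factorization_curve_def)
  have "binary_form (Suc e) g (t, 1) = 0" if "proj_pt (t, 1) \<in> U" for t
  proof -
    have "fs_map m B (hom_eval m e p (t, 1)) \<in> Sigma0 m k (t, 1)"
      using U(3)[of "(t, 1)"] that in_line_span_self by fastforce
    from annihilated_if_Sigma0[OF this]
    have "contract k (t, 1) (fs_map m B (hom_eval m e p (t, 1))) xs = 0"
      using len unfolding annihilated_def zero_tensor_def by blast
    then show ?thesis by (simp only: contraction_form)
  qed
  then have "{t. proj_pt (t, 1) \<in> U} \<subseteq> {t. binary_form (Suc e) g (t, 1) = 0}" by blast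
  then have "infinite {t. binary_form (Suc e) g (t, 1) = 0}"
    using infinite_affine_points_in_zariski_open[OF U(1,2)] by (rule infinite_super)
  then have "binary_form (Suc e) g b = 0" by (rule binary_form_eq_0_if_infinite_affine_zeros)
  then show "contract k b (fs_map m B (hom_eval m e p b)) xs = 0"
    by (simp only: contraction_form)
qed

lemma annihilated_if_line_span_eq:
  fixes B :: "nat \<Rightarrow> bool list \<Rightarrow> 'a::field_char_0"
  assumes "factorization_curve m B k e p" "b \<noteq> (0, 0)"
    and "line_span v = line_span (hom_eval m e p b)"
  shows "annihilated m k b (fs_map m B v)"
proof -
  have "v \<in> line_span (hom_eval m e p b)" using assms(3) in_line_span_self[of v] by simp
  then obtain c where "v = (\<lambda>i. c * hom_eval m e p b i)" by (auto simp: in_line_span_iff)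
  then show ?thesis
    using factorization_curve_annihilated[OF assms(1,2)] by (simp add: fs_map_scale annihilated_scale)
qed

lemma factorization_curve_inj:
  fixes B :: "nat \<Rightarrow> bool list \<Rightarrow> 'a::field_char_0"
  assumes "factorization_structure m B" and curve: "factorization_curve m B j e p"
    and "a \<noteq> (0, 0)" "a' \<noteq> (0, 0)" "proj_pt a \<noteq> proj_pt a'"
  shows "line_span (hom_eval m e p a) \<noteq> line_span (hom_eval m e p a')"
proof
  assume eq: "line_span (hom_eval m e p a) = line_span (hom_eval m e p a')"
  let ?F = "fs_map m B (hom_eval m e p a)"
  have "annihilated m j a ?F" "annihilated m j a' ?F"
    using factorization_curve_annihilated[OF curve assms(3)]
      annihilated_if_line_span_eq[OF curve assms(4) eq] by simp_all
  then have "zero_tensor m ?F"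
    using zero_tensor_if_annihilated_twice det2_neq_0_if_proj_pt_neq[OF assms(3-5)] by blast
  then show False
    using fs_map_hom_eval_nonzero assms(1,3) curve unfolding factorization_curve_def by blast
qed

lemma line_span_hom_eval_eq_if_det2_eq_0:
  assumes "d \<noteq> (0, 0)" "b \<noteq> (0, 0)" "det2 d b = 0"
  shows "line_span (hom_eval m e p b) = line_span (hom_eval m e p d)"
proof -
  obtain c where "c \<noteq> 0" "b = (c * fst d, c * snd d)"
    using det2_eq_0_imp_proportional[OF assms] by blast
  then show ?thesis by (simp add: hom_eval_scale line_span_scale)
qed

lemma curve_image_eq_imp_same_point:
  assumes "curve_image m e' p' = curve_image m e p" "a \<noteq> (0, 0)"
  shows "\<exists>b. b \<noteq> (0, 0) \<and> line_span (hom_eval m e p a) = line_span (hom_eval m e' p' b)"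
proof -
  have "line_span (hom_eval m e p a) \<in> curve_image m e' p'"
    using assms unfolding curve_image_def by blast
  then show ?thesis unfolding curve_image_def by blast
qed

lemma annihilators_on_curve_with_same_image:
  fixes B :: "nat \<Rightarrow> bool list \<Rightarrow> 'a::field_char_0"
  assumes fs: "factorization_structure m B"
    and curve_j: "factorization_curve m B j e p" and curve_k: "factorization_curve m B k e' p'"
    and same_image: "curve_image m e' p' = curve_image m e p"
    and "a \<noteq> (0, 0)" "a' \<noteq> (0, 0)" "proj_pt a \<noteq> proj_pt a'"
  shows "\<exists>b d. annihilated m k b (fs_map m B (hom_eval m e p a)) \<and>
    annihilated m k d (fs_map m B (hom_eval m e p a')) \<and> det2 d b \<noteq> 0"
proof -
  obtain b where b: "b \<noteq> (0, 0)" "line_span (hom_eval m e p a) = line_span (hom_eval m e' p' b)"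
    using curve_image_eq_imp_same_point[OF same_image assms(5)] by blast
  obtain d where d: "d \<noteq> (0, 0)" "line_span (hom_eval m e p a') = line_span (hom_eval m e' p' d)"
    using curve_image_eq_imp_same_point[OF same_image assms(6)] by blast
  have "det2 d b \<noteq> 0"
  proof
    assume "det2 d b = 0"
    then have "line_span (hom_eval m e p a) = line_span (hom_eval m e p a')"
      using b d line_span_hom_eval_eq_if_det2_eq_0[OF d(1) b(1)] by simp
    then show False using factorization_curve_inj[OF fs curve_j assms(5-7)] by blast
  qed
  then show ?thesis using annihilated_if_line_span_eq[OF curve_k] b d by blast
qed

lemma decomposable_curve_points_independent:
  fixes B :: "nat \<Rightarrow> bool list \<Rightarrow> 'a::field_char_0" and p :: "nat \<Rightarrow> nat \<Rightarrow> 'a poly"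
  assumes fs: "factorization_structure m B"
    and curves: "\<forall>k<m. factorization_curve m B k (e k) (p k)"
    and "j < m" and "decomposable m e p j" and "r \<le> e j + 1"
    and nonzero: "\<forall>i<r. a i \<noteq> (0, 0)" and distinct: "inj_on (\<lambda>i. proj_pt (a i)) {..<r}"
  shows "lin_indep_family r (\<lambda>i. hom_eval m (e j) (p j) (a i))"
  unfolding lin_indep_family_def
proof (intro allI impI)
  fix c :: "nat \<Rightarrow> 'a" and i0
  assume relation: "\<forall>t. (\<Sum>i<r. c i * hom_eval m (e j) (p j) (a i) t) = 0" and "i0 < r"
  define F where "F i = fs_map m B (hom_eval m (e j) (p j) (a i))" for i
  define K where "K = {k. k < m \<and> curve_image m (e k) (p k) = curve_image m (e j) (p j)}"
  define I where "I = {..<r} - {i0}"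
  have "card I \<le> card K"
    using assms(4,5) \<open>i0 < r\<close> by (simp add: I_def K_def decomposable_def)
  then obtain g where g: "g ` I \<subseteq> K" "inj_on g I"
    using card_le_inj[of I K] by (auto simp: I_def K_def)
  have "finite I" "i0 \<notin> I" by (simp_all add: I_def)
  moreover have
    "\<exists>b d. annihilated m (g i) b (F i) \<and> annihilated m (g i) d (F i0) \<and> det2 d b \<noteq> 0"
    if "i \<in> I" for i
  proof -
    have "g i < m" "curve_image m (e (g i)) (p (g i)) = curve_image m (e j) (p j)"
      using g(1) that by (auto simp: K_def)
    moreover have "i < r" "proj_pt (a i) \<noteq> proj_pt (a i0)"
      using distinct that \<open>i0 < r\<close> by (auto simp: I_def inj_on_def)
    ultimately show ?thesis
      unfolding F_def using annihilators_on_curve_with_same_image[OF fs] curves \<open>j < m\<close>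
        nonzero \<open>i0 < r\<close> by blast
  qed
  moreover have "\<not> zero_tensor m (F i0)"
    using fs_map_hom_eval_nonzero[OF fs] curves \<open>j < m\<close> nonzero \<open>i0 < r\<close>
    unfolding F_def factorization_curve_def by blast
  moreover have "zero_tensor m (\<lambda>xs. \<Sum>i\<in>insert i0 I. c i * F i xs)"
  proof -
    have "(\<lambda>xs. \<Sum>i<r. c i * F i xs) = fs_map m B (\<lambda>_. 0)"
      using relation unfolding F_def fs_map_sum[symmetric] by simp
    moreover have "insert i0 I = {..<r}" using \<open>i0 < r\<close> by (auto simp: I_def)
    ultimately show ?thesis by (simp add: zero_tensor_def fs_map_def)
  qed
  ultimately show "c i0 = 0" by (rule coefficient_eq_0_by_contractions[OF _ _ g(2)])
qed

theorem corollary2p16: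
  shows "(\<forall>m (B :: nat \<Rightarrow> bool list \<Rightarrow> real) (e :: nat \<Rightarrow> nat) (p :: nat \<Rightarrow> nat \<Rightarrow> real poly)
            j r (a :: nat \<Rightarrow> real \<times> real).
           factorization_structure m B \<and>
           (\<forall>k<m. factorization_curve m B k (e k) (p k)) \<and>
           j < m \<and> decomposable m e p j \<and>
           1 \<le> r \<and> r \<le> e j + 1 \<and>
           (\<forall>i<r. a i \<noteq> (0, 0)) \<and> inj_on (\<lambda>i. proj_pt (a i)) {..<r}
           \<longrightarrow> lin_indep_family r (\<lambda>i. hom_eval m (e j) (p j) (a i)))
       \<and>
         (\<forall>m (B :: nat \<Rightarrow> bool list \<Rightarrow> complex) (e :: nat \<Rightarrow> nat) (p :: nat \<Rightarrow> nat \<Rightarrow> complex poly)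
            j r (a :: nat \<Rightarrow> complex \<times> complex).
           factorization_structure m B \<and>
           (\<forall>k<m. factorization_curve m B k (e k) (p k)) \<and>
           j < m \<and> decomposable m e p j \<and>
           1 \<le> r \<and> r \<le> e j + 1 \<and>
           (\<forall>i<r. a i \<noteq> (0, 0)) \<and> inj_on (\<lambda>i. proj_pt (a i)) {..<r}
           \<longrightarrow> lin_indep_family r (\<lambda>i. hom_eval m (e j) (p j) (a i)))"
  by (intro conjI allI impI) (auto intro!: decomposable_curve_points_independent)

end
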